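(* Let $n\ge2$. For $j=0,\dots,\lfloor n/2\rfloor$, $$\pi(p_j)=\begin{cases}p_0&\text{if }j=0,\\ p_j-p_{j-1}&\text{if }0<j<\lfloor n/2\rfloor,\\ -p_{\lfloor n/2\rfloor-1}&\text{if }j=\lfloor n/2\rfloor,\end{cases}$$ (where on the right $p_i$ denotes the corresponding element for $\mathfrak{S}_{n-2}$). Therefore $\pi$ maps $\wp_n$ onto $\wp_{n-2}$ with a $1$-dimensional kernel spanned by $\sum_{j=0}^{\lfloor n/2\rfloor}p_j=\sum_{u\in\mathfrak{S}_n}u$.
   Context: For $u\in\mathfrak{S}_m$, $\mathrm{Peak}(u)=\{i\in[m-1]:u_{i-1}<u_i>u_{i+1}\}$ with $u_0=0$; $\mathcal{F}_m$: subsets of $[m-1]$ without two consecutive integers; $P_F=\sum_{\mathrm{Peak}(u)=F}u$; $\mathcal{P}_m=\mathrm{span}\{P_F\}$, $\mathcal{P}_0=\mathcal{P}_1=\mathbb{Q}$. $p_j=\sum_{u\in\mathfrak{S}_m,\#\mathrm{Peak}(u)=j}u$ ($0\le j\le\lfloor m/2\rfloor$) and $\wp_m=\mathrm{span}\{p_j\}$. $\pi:\mathcal{P}_n\to\mathcal{P}_{n-2}$ is linear: $P_F\mapsto P_{F-2}$ if $1,2\notin F$; $P_F\mapsto-P_{(F\setminus\{1\})-2}$ if $1\in F$; $P_F\mapsto0$ if $2\in F$ (here $F-2=\{f-2:f\in F\}$). *)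

theory Defs
  imports Complex_Main "HOL-Library.Function_Algebras"
begin

text \<open>Elements of the group algebra Q[S_m] are functions from permutations
(in one-line notation, lists u = [u_1,...,u_m]) to rationals, supported on S_m.\<close>

type_synonym elem = "nat list \<Rightarrow> rat"

definition perms :: "nat \<Rightarrow> nat list set" where
  "perms m = {u. distinct u \<and> set u = {1..m}}"

text \<open>u_i with the convention u_0 = 0 (positions are 1-based).\<close>
definition pval :: "nat list \<Rightarrow> nat \<Rightarrow> nat" where
  "pval u i = (if i = 0 then 0 else u ! (i - 1))"

definition Peak :: "nat list \<Rightarrow> nat set" where
  "Peak u = {i. 1 \<le> i \<and> i \<le> length u - 1 \<and>
              pval u (i - 1) < pval u i \<and> pval u i > pval u (i + 1)}"

definition Fam :: "nat \<Rightarrow> nat set set" where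
  "Fam m = {F. F \<subseteq> {1..m - 1} \<and> (\<forall>i\<in>F. i + 1 \<notin> F)}"

definition smul :: "rat \<Rightarrow> elem \<Rightarrow> elem" where
  "smul c x = (\<lambda>u. c * x u)"

definition PF :: "nat \<Rightarrow> nat set \<Rightarrow> elem" where
  "PF m F = (\<lambda>u. if u \<in> perms m \<and> Peak u = F then 1 else 0)"

definition Pspace :: "nat \<Rightarrow> elem set" where
  "Pspace m = {(\<Sum>F\<in>Fam m. smul (c F) (PF m F)) | c. True}"

definition pj :: "nat \<Rightarrow> nat \<Rightarrow> elem" where
  "pj m j = (\<lambda>u. if u \<in> perms m \<and> card (Peak u) = j then 1 else 0)"

definition wp :: "nat \<Rightarrow> elem set" where
  "wp m = {(\<Sum>j\<le>m div 2. smul (c j) (pj m j)) | c. True}"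

definition allperms :: "nat \<Rightarrow> elem" where
  "allperms m = (\<lambda>u. if u \<in> perms m then 1 else 0)"

definition pi_img :: "nat \<Rightarrow> nat set \<Rightarrow> elem" where
  "pi_img n F =
    (if 2 \<in> F then 0
     else if 1 \<in> F then - PF (n - 2) ((\<lambda>f. f - 2) ` (F - {1}))
     else PF (n - 2) ((\<lambda>f. f - 2) ` F))"

definition is_pi :: "nat \<Rightarrow> (elem \<Rightarrow> elem) \<Rightarrow> bool" where
  "is_pi n \<pi> \<longleftrightarrow> (\<forall>c. \<pi> (\<Sum>F\<in>Fam n. smul (c F) (PF n F)) =
                          (\<Sum>F\<in>Fam n. smul (c F) (pi_img n F)))"

end

theory Submission
  imports Defs
begin

text \<open>
Elements of wp m are the peak class functions u |-> c (card (Peak u)) on S_m, and the sequence c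
is determined on 0..m div 2 because every such number of peaks occurs (prepending 2 1 to a
permutation adds one peak). For u in S_(n-2) and A = Peak u + 2, the only basis elements P_F
whose image under pi involves u are P_A (coefficient 1) and P_(insert 1 A) (coefficient -1).
So pi maps the peak class function of c to that of k |-> c k - c (k + 1); this yields the images
of the p_j, surjectivity by telescoping sums, and the kernel as the constant sequences, i.e. the
multiples of the sum of all permutations.
\<close>

lemma sum_fun_apply: "(\<Sum>x\<in>A. f x) u = (\<Sum>x\<in>A. f x u :: 'b::comm_monoid_add)"
  by (induction A rule: infinite_finite_induct) auto

lemma length_perms: "u \<in> perms m \<Longrightarrow> length u = m"
  unfolding perms_def using distinct_card by fastforce

lemma pval_perms_pos:
  assumes "u \<in> perms m" "1 \<le> i" "i \<le> m"
  shows "0 < pval u i"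
proof -
  have "u ! (i - 1) \<in> set u" using assms length_perms by simp
  then show ?thesis using assms by (simp add: perms_def pval_def)
qed

lemma Peak_in_Fam: "u \<in> perms m \<Longrightarrow> Peak u \<in> Fam m"
  by (auto simp: Fam_def Peak_def length_perms)

lemma finite_Fam: "finite (Fam m)"
  by (rule finite_subset[of _ "Pow {1..m - 1}"]) (auto simp: Fam_def)

lemma finite_Fam_member: "F \<in> Fam m \<Longrightarrow> finite F"
  unfolding Fam_def using finite_subset by blast

lemma card_Fam_member_le:
  assumes "F \<in> Fam m" shows "card F \<le> m div 2"
proof -
  have sub: "F \<subseteq> {1..m - 1}" and sep: "\<forall>i\<in>F. i + 1 \<notin> F" using assms by (auto simp: Fam_def)
  have "F \<inter> Suc ` F = {}" using sep by auto
  then have "card (F \<union> Suc ` F) = 2 * card F"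
    using finite_Fam_member[OF assms] by (simp add: card_Un_disjoint card_image)
  moreover have "card (F \<union> Suc ` F) \<le> m"
    using sub card_mono[of "{1..m}" "F \<union> Suc ` F"] by force
  ultimately show ?thesis by linarith
qed

lemma card_Peak_le: "u \<in> perms m \<Longrightarrow> card (Peak u) \<le> m div 2"
  using Peak_in_Fam card_Fam_member_le by blast

lemma upt_in_perms: "[1..<m + 1] \<in> perms m"
  by (auto simp: perms_def)

lemma Peak_upt: "Peak [1..<m + 1] = {}"
proof -
  have "pval [1..<m + 1] i = i" if "i \<le> m" for i
    using that by (simp add: pval_def nth_upt del: upt_Suc)
  then show ?thesis by (fastforce simp: Peak_def simp del: upt_Suc)
qed

definition prepend21 :: "nat list \<Rightarrow> nat list" where
  "prepend21 u = 2 # 1 # map (\<lambda>x. x + 2) u"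

lemma prepend21_in_perms:
  assumes "u \<in> perms m" shows "prepend21 u \<in> perms (m + 2)"
proof -
  have "set (map (\<lambda>x. x + 2) u) = (\<lambda>x. x + 2) ` {1..m}"
    using assms by (simp add: perms_def)
  also have "\<dots> = {3..m + 2}"
    using image_add_atLeastAtMost'[of 2 1 m] by simp
  finally have "set (map (\<lambda>x. x + 2) u) = {3..m + 2}" .
  moreover have "{1..m + 2} = insert 2 (insert 1 {3..m + 2})" by auto
  ultimately show ?thesis using assms by (auto simp: perms_def prepend21_def distinct_map inj_on_def)
qed

lemma pval_prepend21:
  "1 \<le> i \<Longrightarrow> i \<le> length u \<Longrightarrow> pval (prepend21 u) (i + 2) = pval u i + 2"
  by (simp add: pval_def prepend21_def)

lemma Peak_prepend21:
  assumes u: "u \<in> perms m"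
  shows "Peak (prepend21 u) = insert 1 ((\<lambda>i. i + 2) ` Peak u)"
proof -
  let ?v = "prepend21 u"
  have len: "length u = m" "length ?v = m + 2" using u length_perms by (auto simp: prepend21_def)
  have shifted: "i + 2 \<in> Peak ?v \<longleftrightarrow> i \<in> Peak u" if "1 \<le> i" for i
  proof (cases "i + 1 \<le> m")
    case True
    have "pval ?v (i + 1) < pval ?v (i + 2) \<longleftrightarrow> pval u (i - 1) < pval u i"
    proof (cases "i = 1")
      case True
      have "pval ?v 2 = 1" "pval u 0 = 0" by (simp_all add: pval_def prepend21_def)
      then show ?thesis using True pval_perms_pos[OF u, of 1] pval_prepend21[of 1 u] len \<open>i + 1 \<le> m\<close>
        by (simp add: numeral_2_eq_2)
    next
      case False
      then show ?thesis using pval_prepend21[of "i - 1" u] pval_prepend21[of i u] \<open>i + 1 \<le> m\<close> len that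
        by (simp add: numeral_2_eq_2)
    qed
    moreover have "pval ?v (i + 3) = pval u (i + 1) + 2" "pval ?v (i + 2) = pval u i + 2"
      using pval_prepend21[of "i + 1" u] pval_prepend21[of i u] True that len
      by (simp_all add: numeral_3_eq_3 numeral_2_eq_2)
    ultimately show ?thesis using True that len
      by (auto simp: Peak_def numeral_3_eq_3 numeral_2_eq_2)
  next
    case False
    then show ?thesis using len by (auto simp: Peak_def)
  qed
  have "1 \<in> Peak ?v" "0 \<notin> Peak ?v" "2 \<notin> Peak ?v" using len
    by (auto simp: Peak_def pval_def prepend21_def numeral_2_eq_2)
  moreover have "0 \<notin> Peak u" by (simp add: Peak_def)
  ultimately show ?thesis
  proof (intro set_eqI)
    fix i :: nat
    have "i = 0 \<or> i = 1 \<or> i = 2 \<or> (\<exists>j. 1 \<le> j \<and> i = j + 2)" by presburger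
    then show "i \<in> Peak ?v \<longleftrightarrow> i \<in> insert 1 ((\<lambda>i. i + 2) ` Peak u)"
      using shifted \<open>1 \<in> Peak ?v\<close> \<open>0 \<notin> Peak ?v\<close> \<open>2 \<notin> Peak ?v\<close> \<open>0 \<notin> Peak u\<close> by force
  qed
qed

lemma ex_perm_card_Peak: "j \<le> m div 2 \<Longrightarrow> \<exists>u\<in>perms m. card (Peak u) = j"
proof (induction j arbitrary: m)
  case 0
  show ?case using upt_in_perms Peak_upt by (metis card.empty)
next
  case (Suc j)
  then have "j \<le> (m - 2) div 2" by auto
  then obtain u where u: "u \<in> perms (m - 2)" "card (Peak u) = j" using Suc.IH by blast
  have "finite (Peak u)" using u Peak_in_Fam finite_Fam_member by blast
  moreover have "card ((\<lambda>i. i + 2) ` Peak u) = card (Peak u)"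
    by (simp add: card_image inj_on_def)
  moreover have "1 \<notin> (\<lambda>i. i + 2) ` Peak u" by auto
  ultimately have "card (Peak (prepend21 u)) = Suc j"
    using Peak_prepend21[OF u(1)] u(2) by simp
  moreover have "m - 2 + 2 = m" using Suc.prems by auto
  ultimately show ?case using prepend21_in_perms[OF u(1)] by metis
qed

definition peak_class :: "nat \<Rightarrow> (nat \<Rightarrow> rat) \<Rightarrow> elem" where
  "peak_class m c = (\<lambda>u. if u \<in> perms m then c (card (Peak u)) else 0)"

lemma peak_class_eq_iff: "peak_class m c = peak_class m d \<longleftrightarrow> (\<forall>k \<le> m div 2. c k = d k)"
proof
  assume eq: "peak_class m c = peak_class m d"
  show "\<forall>k \<le> m div 2. c k = d k"
  proof (intro allI impI)
    fix k assume "k \<le> m div 2"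
    then obtain u where "u \<in> perms m" "card (Peak u) = k" using ex_perm_card_Peak by blast
    then show "c k = d k" using fun_cong[OF eq, of u] by (simp add: peak_class_def)
  qed
qed (auto simp: peak_class_def card_Peak_le)

lemma peak_class_zero: "peak_class m (\<lambda>k. 0) = 0"
  by (simp add: peak_class_def fun_eq_iff)

lemma peak_class_diff: "peak_class m c - peak_class m d = peak_class m (\<lambda>k. c k - d k)"
  by (simp add: peak_class_def fun_eq_iff)

lemma peak_class_uminus: "- peak_class m c = peak_class m (\<lambda>k. - c k)"
  by (simp add: peak_class_def fun_eq_iff)

lemma smul_peak_class: "smul a (peak_class m c) = peak_class m (\<lambda>k. a * c k)"
  by (simp add: peak_class_def smul_def fun_eq_iff)

lemma pj_eq_peak_class: "pj m j = peak_class m (\<lambda>k. if k = j then 1 else 0)"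
  by (auto simp: pj_def peak_class_def)

lemma allperms_eq_peak_class: "allperms m = peak_class m (\<lambda>k. 1)"
  by (simp add: allperms_def peak_class_def)

lemma sum_pj_eq_peak_class:
  assumes "m div 2 \<le> K"
  shows "(\<Sum>j\<le>K. smul (c j) (pj m j)) = peak_class m c"
proof
  fix u
  show "(\<Sum>j\<le>K. smul (c j) (pj m j)) u = peak_class m c u"
  proof (cases "u \<in> perms m")
    case True
    then have "(\<Sum>j\<le>K. smul (c j) (pj m j)) u = (\<Sum>j\<le>K. if j = card (Peak u) then c j else 0)"
      unfolding sum_fun_apply smul_def pj_def by (intro sum.cong) auto
    also have "\<dots> = c (card (Peak u))" using card_Peak_le[OF True] assms by simp
    finally show ?thesis using True by (simp add: peak_class_def)
  qed (simp add: sum_fun_apply smul_def pj_def peak_class_def)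
qed

lemma wp_eq_range_peak_class: "wp m = range (peak_class m)"
  unfolding wp_def using sum_pj_eq_peak_class[of m "m div 2"] by auto

lemma sum_pj_eq_allperms: "(\<Sum>j\<le>m div 2. pj m j) = allperms m"
  using sum_pj_eq_peak_class[of m "m div 2" "\<lambda>k. 1"]
  by (simp add: smul_def allperms_eq_peak_class)

lemma allperms_nonzero: "allperms m \<noteq> 0"
proof
  assume "allperms m = 0"
  then have "allperms m [1..<m + 1] = 0" by simp
  then show False using upt_in_perms by (simp add: allperms_def del: upt_Suc)
qed

lemma sum_PF_eq:
  "(\<Sum>F\<in>Fam m. smul (d F) (PF m F)) = (\<lambda>u. if u \<in> perms m then d (Peak u) else 0)"
proof
  fix u
  show "(\<Sum>F\<in>Fam m. smul (d F) (PF m F)) u = (if u \<in> perms m then d (Peak u) else 0)"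
  proof (cases "u \<in> perms m")
    case True
    then have "(\<Sum>F\<in>Fam m. smul (d F) (PF m F)) u = (\<Sum>F\<in>Fam m. if F = Peak u then d F else 0)"
      by (auto simp: sum_fun_apply smul_def PF_def intro: sum.cong)
    also have "\<dots> = d (Peak u)" using True Peak_in_Fam finite_Fam by (simp add: sum.delta')
    finally show ?thesis using True by simp
  qed (simp add: sum_fun_apply smul_def PF_def)
qed

lemma image_diff_eq_iff:
  fixes k :: nat
  assumes "\<forall>x\<in>S. k \<le> x"
  shows "(\<lambda>x. x - k) ` S = P \<longleftrightarrow> S = (\<lambda>x. x + k) ` P"
proof -
  have "(\<lambda>x. x + k) ` (\<lambda>x. x - k) ` S = S"
    using assms by (force simp: image_image)
  then show ?thesis by (auto simp: image_image)
qed

lemma pi_img_apply: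
  assumes F: "F \<in> Fam n" and u: "u \<in> perms (n - 2)"
  defines "A \<equiv> (\<lambda>i. i + 2) ` Peak u"
  shows "pi_img n F u = (if F = A then 1 else 0) - (if F = insert 1 A then 1 else 0)"
proof -
  have A12: "1 \<notin> A" "2 \<notin> A" by (auto simp: A_def Peak_def)
  have unshift: "Peak u = (\<lambda>i. i - 2) ` G \<longleftrightarrow> G = A" if "G \<subseteq> F - {1, 2}" for G
  proof -
    have "\<forall>x\<in>G. 2 \<le> x" using that F by (force simp: Fam_def)
    then show ?thesis using image_diff_eq_iff[of G 2 "Peak u"] by (auto simp: A_def)
  qed
  consider "2 \<in> F" | "2 \<notin> F" "1 \<in> F" | "2 \<notin> F" "1 \<notin> F" by blast
  then show ?thesis
  proof cases
    case 1
    then show ?thesis using A12 by (auto simp: pi_img_def)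
  next
    case 2
    then have "Peak u = (\<lambda>i. i - 2) ` (F - {1}) \<longleftrightarrow> F = insert 1 A"
      using unshift[of "F - {1}"] A12 by auto
    moreover have "F \<noteq> A" using 2 A12 by auto
    ultimately show ?thesis using 2 u by (simp add: pi_img_def PF_def)
  next
    case 3
    then have "Peak u = (\<lambda>i. i - 2) ` F \<longleftrightarrow> F = A" using unshift[of F] by auto
    moreover have "F \<noteq> insert 1 A" using 3 by auto
    ultimately show ?thesis using 3 u by (simp add: pi_img_def PF_def)
  qed
qed

lemma shifted_Peak_in_Fam:
  assumes "n \<ge> 2" "u \<in> perms (n - 2)"
  defines "A \<equiv> (\<lambda>i. i + 2) ` Peak u"
  shows "A \<in> Fam n" "insert 1 A \<in> Fam n"
proof -
  have "Peak u \<in> Fam (n - 2)" using assms Peak_in_Fam by blast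
  then have "A \<subseteq> {3..n - 1}" "\<forall>i\<in>A. i + 1 \<notin> A" by (force simp: Fam_def A_def)+
  then show "A \<in> Fam n" "insert 1 A \<in> Fam n" using assms(1) by (force simp: Fam_def)+
qed

lemma sum_pi_img_eq:
  assumes "n \<ge> 2"
  shows "(\<Sum>F\<in>Fam n. smul (d F) (pi_img n F)) =
    (\<lambda>u. if u \<in> perms (n - 2)
         then d ((\<lambda>i. i + 2) ` Peak u) - d (insert 1 ((\<lambda>i. i + 2) ` Peak u)) else 0)"
proof
  fix u
  let ?A = "(\<lambda>i. i + 2) ` Peak u"
  show "(\<Sum>F\<in>Fam n. smul (d F) (pi_img n F)) u =
    (if u \<in> perms (n - 2) then d ?A - d (insert 1 ?A) else 0)"
  proof (cases "u \<in> perms (n - 2)")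
    case True
    then have "(\<Sum>F\<in>Fam n. smul (d F) (pi_img n F)) u =
        (\<Sum>F\<in>Fam n. (if F = ?A then d F else 0) - (if F = insert 1 ?A then d F else 0))"
      by (auto simp: sum_fun_apply smul_def pi_img_apply intro: sum.cong)
    also have "\<dots> = d ?A - d (insert 1 ?A)"
      using shifted_Peak_in_Fam[OF assms True] finite_Fam by (simp add: sum_subtractf sum.delta')
    finally show ?thesis using True by simp
  qed (auto simp: sum_fun_apply smul_def pi_img_def PF_def intro!: sum.neutral)
qed

lemma pi_peak_class:
  assumes "n \<ge> 2" and "is_pi n \<pi>"
  shows "\<pi> (peak_class n c) = peak_class (n - 2) (\<lambda>k. c k - c (Suc k))"
proof -
  have "\<pi> (peak_class n c) = \<pi> (\<Sum>F\<in>Fam n. smul (c (card F)) (PF n F))"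
    by (simp add: sum_PF_eq peak_class_def)
  also have "\<dots> = (\<Sum>F\<in>Fam n. smul (c (card F)) (pi_img n F))"
    using assms(2) by (simp add: is_pi_def)
  also have "\<dots> = peak_class (n - 2) (\<lambda>k. c k - c (Suc k))"
  proof -
    have "card ((\<lambda>i. i + 2) ` Peak u) = card (Peak u)" for u
      by (simp add: card_image inj_on_def)
    moreover have "1 \<notin> (\<lambda>i. i + 2) ` Peak u" "finite (Peak u)" if "u \<in> perms (n - 2)" for u
      using that Peak_in_Fam finite_Fam_member by auto
    ultimately show ?thesis by (auto simp: sum_pi_img_eq[OF assms(1)] peak_class_def)
  qed
  finally show ?thesis .
qed

lemma pi_pj:
  assumes "n \<ge> 2" and "is_pi n \<pi>" and "j \<le> n div 2"
  shows "\<pi> (pj n j) =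
           (if j = 0 then pj (n - 2) 0
            else if j < n div 2 then pj (n - 2) j - pj (n - 2) (j - 1)
            else - pj (n - 2) (n div 2 - 1))"
proof -
  have "\<pi> (pj n j) = peak_class (n - 2) (\<lambda>k. (if k = j then 1 else 0) - (if Suc k = j then 1 else 0))"
    using pi_peak_class[OF assms(1,2)] by (simp add: pj_eq_peak_class)
  moreover have "(n - 2) div 2 = n div 2 - 1" by simp
  ultimately show ?thesis using assms(3)
    by (auto simp: pj_eq_peak_class peak_class_diff peak_class_uminus peak_class_eq_iff)
qed

lemma pi_image_wp:
  assumes "n \<ge> 2" and "is_pi n \<pi>"
  shows "\<pi> ` wp n = wp (n - 2)"
proof
  show "\<pi> ` wp n \<subseteq> wp (n - 2)"
    using pi_peak_class[OF assms] by (auto simp: wp_eq_range_peak_class)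
next
  show "wp (n - 2) \<subseteq> \<pi> ` wp n"
  proof
    fix y assume "y \<in> wp (n - 2)"
    then obtain d where y: "y = peak_class (n - 2) d" by (auto simp: wp_eq_range_peak_class)
    define c where "c i = (\<Sum>k = i..<n. d k)" for i
    have "c k - c (Suc k) = d k" if "k \<le> (n - 2) div 2" for k
      using that assms(1) by (simp add: c_def sum.atLeast_Suc_lessThan)
    then have "\<pi> (peak_class n c) = y"
      by (simp add: pi_peak_class[OF assms] y peak_class_eq_iff)
    then show "y \<in> \<pi> ` wp n" by (auto simp: wp_eq_range_peak_class)
  qed
qed

lemma pi_kernel_wp:
  assumes "n \<ge> 2" and "is_pi n \<pi>"
  shows "{x \<in> wp n. \<pi> x = 0} = {smul a (allperms n) | a. True}"
proof -
  have kernel: "\<pi> (peak_class n c) = 0 \<longleftrightarrow> (\<forall>k \<le> n div 2. c k = c 0)" for c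
  proof -
    have "\<pi> (peak_class n c) = 0 \<longleftrightarrow>
        peak_class (n - 2) (\<lambda>k. c k - c (Suc k)) = peak_class (n - 2) (\<lambda>k. 0)"
      by (simp add: pi_peak_class[OF assms] peak_class_zero)
    also have "\<dots> \<longleftrightarrow> (\<forall>k \<le> (n - 2) div 2. c k = c (Suc k))"
      by (simp add: peak_class_eq_iff)
    also have "\<dots> \<longleftrightarrow> (\<forall>k < n div 2. c k = c (Suc k))"
    proof -
      have "n div 2 = Suc ((n - 2) div 2)" using assms(1) by (simp add: div_if)
      then show ?thesis by (simp add: less_Suc_eq_le)
    qed
    also have "\<dots> \<longleftrightarrow> (\<forall>k \<le> n div 2. c k = c 0)"
    proof
      assume step: "\<forall>k < n div 2. c k = c (Suc k)"
      show "\<forall>k \<le> n div 2. c k = c 0"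
      proof (intro allI impI)
        fix k show "k \<le> n div 2 \<Longrightarrow> c k = c 0"
        proof (induction k)
          case (Suc k)
          then have "k < n div 2" "c k = c 0" by simp_all
          then show ?case using step by metis
        qed simp
      qed
    next
      assume "\<forall>k \<le> n div 2. c k = c 0"
      then show "\<forall>k < n div 2. c k = c (Suc k)" by (metis Suc_leI less_imp_le_nat)
    qed
    finally show ?thesis .
  qed
  show ?thesis
  proof (intro set_eqI iffI)
    fix x assume "x \<in> {x \<in> wp n. \<pi> x = 0}"
    then obtain c where x: "x = peak_class n c" and const: "\<forall>k \<le> n div 2. c k = c 0"
      using kernel by (auto simp: wp_eq_range_peak_class)
    have "x = smul (c 0) (allperms n)"
      unfolding x allperms_eq_peak_class smul_peak_class peak_class_eq_iff
      using const by (metis mult_1_right)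
    then show "x \<in> {smul a (allperms n) | a. True}" by blast
  next
    fix x assume "x \<in> {smul a (allperms n) | a. True}"
    then obtain a where "x = peak_class n (\<lambda>k. a)"
      by (auto simp: allperms_eq_peak_class smul_peak_class)
    then show "x \<in> {x \<in> wp n. \<pi> x = 0}" using kernel by (simp add: wp_eq_range_peak_class)
  qed
qed

theorem proposition6p11:
  fixes n :: nat and \<pi> :: "elem \<Rightarrow> elem"
  assumes "n \<ge> 2" and "is_pi n \<pi>"
  shows "(\<forall>j \<le> n div 2. \<pi> (pj n j) =
            (if j = 0 then pj (n - 2) 0
             else if j < n div 2 then pj (n - 2) j - pj (n - 2) (j - 1)
             else - pj (n - 2) (n div 2 - 1)))
       \<and> \<pi> ` wp n = wp (n - 2)
       \<and> {x \<in> wp n. \<pi> x = 0} = {smul c (\<Sum>j\<le>n div 2. pj n j) | c. True}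
       \<and> (\<Sum>j\<le>n div 2. pj n j) = allperms n
       \<and> allperms n \<noteq> 0"
  unfolding sum_pj_eq_allperms
  using pi_pj[OF assms] pi_image_wp[OF assms] pi_kernel_wp[OF assms] allperms_nonzero
  by blast

end
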